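(* A ring $R$ is 2-primal if and only if $\beta(R)=E_R(0)$.
   Context: Rings are associative with identity. $\beta(R)$ is the prime radical of $R$ (intersection of all prime ideals). $R$ is 2-primal if the set $\mathcal N(R)$ of nilpotent elements of $R$ equals $\beta(R)$. $E_R(0)=\{ab : a,b\in R,\ a^kb=0 \text{ for some } k\in\mathbb N\}$ (the envelope of the zero submodule of the left module ${}_RR$). *)

theory Defs
  imports Main
begin

definition two_sided_ideal :: "'a::ring_1 set \<Rightarrow> bool" where
  "two_sided_ideal I \<longleftrightarrow> 0 \<in> I \<and> (\<forall>x\<in>I. \<forall>y\<in>I. x - y \<in> I)
     \<and> (\<forall>x\<in>I. \<forall>r. r * x \<in> I \<and> x * r \<in> I)"

definition prime_ideal :: "'a::ring_1 set \<Rightarrow> bool" where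
  "prime_ideal P \<longleftrightarrow> two_sided_ideal P \<and> P \<noteq> UNIV
     \<and> (\<forall>a b. (\<forall>r. a * r * b \<in> P) \<longrightarrow> a \<in> P \<or> b \<in> P)"

definition prime_radical :: "'a::ring_1 set" where
  "prime_radical = \<Inter> {P. prime_ideal P}"

definition nilpotents :: "'a::ring_1 set" where
  "nilpotents = {x. \<exists>n::nat. x ^ n = 0}"

definition two_primal :: "'a::ring_1 itself \<Rightarrow> bool" where
  "two_primal _ \<longleftrightarrow> (nilpotents :: 'a set) = prime_radical"

definition envelope_zero :: "'a::ring_1 set" where
  "envelope_zero = {a * b | a b. \<exists>k::nat. k \<ge> 1 \<and> a ^ k * b = 0}"

end

theory Submission
  imports Defs
begin

text \<open>Always \<open>\<N>(R) \<subseteq> E\<^sub>R(0)\<close>, since \<open>x = x\<cdot>1\<close>, and always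
  \<open>\<beta>(R) \<subseteq> \<N>(R)\<close>: an ideal maximal among those avoiding the powers of a non-nilpotent \<open>x\<close>
  is prime. Conversely, if \<open>\<N>(R) = \<beta>(R)\<close> then \<open>\<N>(R)\<close> is an ideal with \<open>x\<^sup>2 \<in> \<N>(R) \<Longrightarrow> x \<in> \<N>(R)\<close>,
  and in such a completely semiprime ideal \<open>I\<close> the relation \<open>a\<^sup>k\<^sup>+\<^sup>1 b \<in> I\<close> descends to \<open>a b \<in> I\<close>,
  so \<open>E\<^sub>R(0) \<subseteq> \<N>(R)\<close>.\<close>

lemma two_sided_idealD:
  assumes "two_sided_ideal I"
  shows "0 \<in> I" "x \<in> I \<Longrightarrow> y \<in> I \<Longrightarrow> x - y \<in> I"
    "x \<in> I \<Longrightarrow> r * x \<in> I" "x \<in> I \<Longrightarrow> x * r \<in> I"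
  using assms unfolding two_sided_ideal_def by auto

lemma two_sided_idealI:
  assumes "0 \<in> I" "\<And>x y. x \<in> I \<Longrightarrow> y \<in> I \<Longrightarrow> x - y \<in> I"
    and "\<And>x r. x \<in> I \<Longrightarrow> r * x \<in> I" "\<And>x r. x \<in> I \<Longrightarrow> x * r \<in> I"
  shows "two_sided_ideal I"
  using assms unfolding two_sided_ideal_def by blast

lemma two_sided_ideal_Inter:
  assumes "\<And>I. I \<in> S \<Longrightarrow> two_sided_ideal (I::'a::ring_1 set)"
  shows "two_sided_ideal (\<Inter>S)"
  using assms unfolding two_sided_ideal_def by blast

lemma two_sided_ideal_Union_chain:
  assumes "C \<noteq> {}" and "\<And>I. I \<in> C \<Longrightarrow> two_sided_ideal (I::'a::ring_1 set)"
    and "\<And>I J. I \<in> C \<Longrightarrow> J \<in> C \<Longrightarrow> I \<subseteq> J \<or> J \<subseteq> I"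
  shows "two_sided_ideal (\<Union>C)"
  unfolding two_sided_ideal_def
proof (intro conjI ballI allI)
  show "0 \<in> \<Union>C"
    using assms(1,2) two_sided_idealD(1) by blast
next
  fix x y assume "x \<in> \<Union>C" "y \<in> \<Union>C"
  then obtain I J where "I \<in> C" "x \<in> I" "J \<in> C" "y \<in> J" by blast
  with assms(2)[of I] assms(2)[of J] assms(3)[of I J] show "x - y \<in> \<Union>C"
    by (meson UnionI subsetD two_sided_idealD(2))
next
  fix x r assume "x \<in> \<Union>C"
  then obtain I where "I \<in> C" "x \<in> I" by blast
  with assms(2)[of I] show "r * x \<in> \<Union>C" "x * r \<in> \<Union>C"
    by (meson UnionI two_sided_idealD(3,4))+
qed

lemma prime_radical_two_sided_ideal: "two_sided_ideal (prime_radical :: 'a::ring_1 set)"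
  unfolding prime_radical_def
  by (rule two_sided_ideal_Inter) (simp add: prime_ideal_def)

locale completely_semiprime_ideal =
  fixes I :: "'a::ring_1 set"
  assumes two_sided_ideal: "two_sided_ideal I"
    and square_memD: "x * x \<in> I \<Longrightarrow> x \<in> I"
begin

lemmas ideal_closed = two_sided_idealD[OF two_sided_ideal]

lemma mult_commute_mem:
  assumes "x * y \<in> I"
  shows "y * x \<in> I"
proof (rule square_memD)
  have "(y * x) * (y * x) = y * (x * y) * x" by (simp add: mult.assoc)
  also have "\<dots> \<in> I" using assms by (simp add: ideal_closed(3,4))
  finally show "(y * x) * (y * x) \<in> I" .
qed

lemma mult_middle_mem:
  assumes "x * y \<in> I"
  shows "x * r * y \<in> I"
proof (rule square_memD)
  have "(x * r * y) * (x * r * y) = x * r * (y * x) * r * y" by (simp add: mult.assoc)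
  also have "\<dots> \<in> I" using mult_commute_mem[OF assms] by (simp add: ideal_closed(3,4))
  finally show "(x * r * y) * (x * r * y) \<in> I" .
qed

lemma power_mult_mem:
  "a ^ Suc k * b \<in> I \<Longrightarrow> a * b \<in> I"
proof (induction k)
  case 0
  then show ?case by simp
next
  case (Suc k)
  define c where "c = a ^ Suc k * b"
  have "a * c \<in> I" using Suc.prems by (simp add: c_def mult.assoc)
  then have "a * b * c \<in> I" by (rule mult_middle_mem)
  have "c * c = a ^ k * (a * b * c)" by (simp only: c_def power_Suc2 mult.assoc)
  also have "\<dots> \<in> I" using \<open>a * b * c \<in> I\<close> by (rule ideal_closed(3))
  finally have "c \<in> I" by (rule square_memD)
  then show ?case using Suc.IH by (simp add: c_def)
qed

lemma envelope_zero_subset: "envelope_zero \<subseteq> I"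
proof
  fix y :: 'a assume "y \<in> envelope_zero"
  then obtain a b k where y: "y = a * b" and "k \<ge> 1" "a ^ k * b = 0"
    by (auto simp: envelope_zero_def)
  then obtain j where "a ^ Suc j * b = 0" by (cases k) auto
  then have "a ^ Suc j * b \<in> I" using ideal_closed(1) by simp
  then show "y \<in> I" unfolding y by (rule power_mult_mem)
qed

end

lemma completely_semiprime_ideal_nilpotents:
  assumes "two_sided_ideal (nilpotents :: 'a::ring_1 set)"
  shows "completely_semiprime_ideal (nilpotents :: 'a set)"
proof (unfold_locales, fact assms)
  fix x :: 'a assume "x * x \<in> nilpotents"
  then obtain n where "(x * x) ^ n = 0" by (auto simp: nilpotents_def)
  then have "x ^ (2 * n) = 0" by (simp add: power_mult power2_eq_square)
  then show "x \<in> nilpotents" by (auto simp: nilpotents_def)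
qed

lemma nilpotents_subset_envelope_zero: "(nilpotents :: 'a::ring_1 set) \<subseteq> envelope_zero"
proof
  fix x :: 'a assume "x \<in> nilpotents"
  then obtain n where "x ^ n = 0" by (auto simp: nilpotents_def)
  then have "x ^ Suc n * 1 = 0" by (simp add: power_commutes)
  then show "x \<in> envelope_zero"
    unfolding envelope_zero_def by (intro CollectI exI[of _ x] exI[of _ 1]) auto
qed

lemma two_sided_ideal_left_sandwich:
  assumes "two_sided_ideal P"
  shows "two_sided_ideal {v. \<forall>r. a * r * v \<in> P}"
proof (rule two_sided_idealI; simp)
  show "0 \<in> P" using assms by (rule two_sided_idealD)
next
  fix x y assume "\<forall>r. a * r * x \<in> P" "\<forall>r. a * r * y \<in> P"
  then show "\<forall>r. a * r * (x - y) \<in> P"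
    using assms by (simp add: right_diff_distrib two_sided_idealD)
next
  fix x s assume x: "\<forall>r. a * r * x \<in> P"
  show "\<forall>r. a * r * (s * x) \<in> P"
    using x[rule_format, of "_ * s"] by (simp add: mult.assoc)
  show "\<forall>r. a * r * (x * s) \<in> P"
    using x assms by (metis mult.assoc two_sided_idealD(4))
qed

lemma two_sided_ideal_right_sandwich:
  assumes "two_sided_ideal P"
  shows "two_sided_ideal {u. \<forall>r. u * r * b \<in> P}"
proof (rule two_sided_idealI; simp)
  show "0 \<in> P" using assms by (rule two_sided_idealD)
next
  fix x y assume "\<forall>r. x * r * b \<in> P" "\<forall>r. y * r * b \<in> P"
  then show "\<forall>r. (x - y) * r * b \<in> P"
    using assms by (simp add: left_diff_distrib two_sided_idealD)
next
  fix x s assume x: "\<forall>r. x * r * b \<in> P"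
  show "\<forall>r. s * x * r * b \<in> P"
    using x assms by (metis mult.assoc two_sided_idealD(3))
  show "\<forall>r. x * s * r * b \<in> P"
    using x[rule_format, of "s * _"] by (simp add: mult.assoc)
qed

lemma ex_maximal_two_sided_ideal_avoiding:
  assumes "(0::'a::ring_1) \<notin> S"
  obtains P where "two_sided_ideal P" "P \<inter> S = {}"
    "\<And>Q. two_sided_ideal Q \<Longrightarrow> P \<subseteq> Q \<Longrightarrow> Q \<inter> S = {} \<Longrightarrow> Q = P"
proof -
  define A where "A = {P. two_sided_ideal P \<and> P \<inter> S = {}}"
  have "\<exists>U\<in>A. \<forall>X\<in>C. X \<subseteq> U" if "C \<in> chains A" for C
  proof (cases "C = {}")
    case True
    have "{0} \<in> A" using assms by (auto simp: A_def two_sided_ideal_def)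
    then show ?thesis using True by blast
  next
    case False
    from that have "C \<subseteq> A" and "\<And>I J. I \<in> C \<Longrightarrow> J \<in> C \<Longrightarrow> I \<subseteq> J \<or> J \<subseteq> I"
      by (auto simp: chains_def chain_subset_def)
    then have "two_sided_ideal (\<Union>C)"
      using False by (intro two_sided_ideal_Union_chain) (auto simp: A_def)
    moreover have "\<Union>C \<inter> S = {}"
      using \<open>C \<subseteq> A\<close> by (auto simp: A_def)
    ultimately show ?thesis unfolding A_def by blast
  qed
  then obtain P where "P \<in> A" "\<forall>Q\<in>A. P \<subseteq> Q \<longrightarrow> Q = P"
    using Zorn_Lemma2[of A] by blast
  then show thesis
    by (intro that) (auto simp: A_def)
qed

lemma maximal_two_sided_ideal_avoiding_prime:
  assumes "two_sided_ideal P" and "P \<inter> S = {}" and "S \<noteq> {}"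
    and maximal: "\<And>Q. two_sided_ideal Q \<Longrightarrow> P \<subseteq> Q \<Longrightarrow> Q \<inter> S = {} \<Longrightarrow> Q = P"
    and m_system: "\<And>s t. s \<in> S \<Longrightarrow> t \<in> S \<Longrightarrow> \<exists>r. s * r * t \<in> S"
  shows "prime_ideal P"
  unfolding prime_ideal_def
proof (intro conjI allI impI assms(1))
  show "P \<noteq> UNIV" using assms(2,3) by blast
next
  fix a b assume ab: "\<forall>r. a * r * b \<in> P"
  show "a \<in> P \<or> b \<in> P"
  proof (rule ccontr)
    assume "\<not> (a \<in> P \<or> b \<in> P)"
    text \<open>Each sandwich ideal strictly contains \<open>P\<close>, so by maximality it meets \<open>S\<close>.\<close>
    have "P \<subseteq> {v. \<forall>r. a * r * v \<in> P}"
      using assms(1) by (auto simp: two_sided_idealD)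
    moreover have "{v. \<forall>r. a * r * v \<in> P} \<noteq> P"
      using ab \<open>\<not> (a \<in> P \<or> b \<in> P)\<close> by blast
    ultimately obtain t where "t \<in> S" and at: "\<forall>r. a * r * t \<in> P"
      using maximal two_sided_ideal_left_sandwich[OF assms(1)] by blast
    have "P \<subseteq> {u. \<forall>r. u * r * t \<in> P}"
      using assms(1) by (auto simp: two_sided_idealD)
    moreover have "{u. \<forall>r. u * r * t \<in> P} \<noteq> P"
      using at \<open>\<not> (a \<in> P \<or> b \<in> P)\<close> by blast
    ultimately obtain s where "s \<in> S" and "\<forall>r. s * r * t \<in> P"
      using maximal two_sided_ideal_right_sandwich[OF assms(1)] by blast
    with m_system[OF \<open>s \<in> S\<close> \<open>t \<in> S\<close>] assms(2) show False by blast
  qed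
qed

lemma prime_radical_subset_nilpotents: "(prime_radical :: 'a::ring_1 set) \<subseteq> nilpotents"
proof
  fix x :: 'a assume "x \<in> prime_radical"
  show "x \<in> nilpotents"
  proof (rule ccontr)
    define S where "S = range (\<lambda>n::nat. x ^ n)"
    assume "x \<notin> nilpotents"
    then have "0 \<notin> S" by (auto simp: S_def nilpotents_def)
    then obtain P where P: "two_sided_ideal P" "P \<inter> S = {}"
      and "\<And>Q. two_sided_ideal Q \<Longrightarrow> P \<subseteq> Q \<Longrightarrow> Q \<inter> S = {} \<Longrightarrow> Q = P"
      using ex_maximal_two_sided_ideal_avoiding by blast
    moreover have "\<exists>r. s * r * t \<in> S" if "s \<in> S" "t \<in> S" for s t
      using that by (auto simp: S_def power_add[symmetric] intro!: exI[of _ 1])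
    ultimately have "prime_ideal P"
      by (intro maximal_two_sided_ideal_avoiding_prime) (auto simp: S_def)
    then have "x \<in> P"
      using \<open>x \<in> prime_radical\<close> by (auto simp: prime_radical_def)
    moreover have "x \<in> S" by (auto simp: S_def intro: range_eqI[of _ _ 1])
    ultimately show False using P(2) by blast
  qed
qed

theorem theorem4p4:
  shows "two_primal TYPE('a::ring_1) \<longleftrightarrow> (prime_radical :: 'a set) = envelope_zero"
proof
  assume "two_primal TYPE('a::ring_1)"
  then have nil: "(nilpotents :: 'a set) = prime_radical"
    by (simp add: two_primal_def)
  then have "completely_semiprime_ideal (nilpotents :: 'a set)"
    using completely_semiprime_ideal_nilpotents prime_radical_two_sided_ideal by metis
  then have "envelope_zero \<subseteq> (nilpotents :: 'a set)"
    by (rule completely_semiprime_ideal.envelope_zero_subset)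
  with nil nilpotents_subset_envelope_zero show "(prime_radical :: 'a set) = envelope_zero"
    by blast
next
  assume "(prime_radical :: 'a set) = envelope_zero"
  with nilpotents_subset_envelope_zero prime_radical_subset_nilpotents
  show "two_primal TYPE('a::ring_1)"
    unfolding two_primal_def by blast
qed

end
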